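(* Let $\alpha\ge0$, $\mu\ge0$ and $n\in\mathbb{N}$. For every $f\in C_B([0,\infty))$, the function $x\mapsto T_n(f;x)$ belongs to $C_B([0,\infty))$, and $\|T_n(f)\|\le\|f\|$.
   Context: $C_B([0,\infty))$ is the space of bounded continuous real functions on $[0,\infty)$ with the norm $\|f\|=\sup_{x\ge0}|f(x)|$. For $\mu>-\tfrac12$ define $\gamma_\mu(2k)=\dfrac{2^{2k}k!\,\Gamma(k+\mu+1/2)}{\Gamma(\mu+1/2)}$ and $\gamma_\mu(2k+1)=\dfrac{2^{2k+1}k!\,\Gamma(k+\mu+3/2)}{\Gamma(\mu+1/2)}$, $k\ge0$; $e_\mu(x)=\sum_{k\ge0} x^k/\gamma_\mu(k)$; $\theta_k=0$ if $k$ is even and $\theta_k=1$ if $k$ is odd. Let $h_k^\mu(\xi,\alpha)=\gamma_\mu(k)\sum_{j=0}^{\lfloor k/2\rfloor}\dfrac{\alpha^j\xi^{k-2j}}{j!\,\gamma_\mu(k-2j)}$. For $\alpha\ge0,\mu\ge0$, $n\in\mathbb{N}$ and $x\in[0,\infty)$ define $$T_n(f;x)=\frac{1}{e^{\alpha x^2}e_\mu(nx)}\sum_{k=0}^\infty \frac{h_k^\mu(n,\alpha)}{\gamma_\mu(k)}x^k f\!\left(\frac{k+2\mu\theta_k}{n}\right).$$ *)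

theory Defs
  imports "HOL-Analysis.Analysis"
begin

definition gamma_mu :: "real \<Rightarrow> nat \<Rightarrow> real" where
  "gamma_mu \<mu> m =
     (if even m
      then 2 ^ m * fact (m div 2) * Gamma (real (m div 2) + \<mu> + 1/2) / Gamma (\<mu> + 1/2)
      else 2 ^ m * fact (m div 2) * Gamma (real (m div 2) + \<mu> + 3/2) / Gamma (\<mu> + 1/2))"

definition e_mu :: "real \<Rightarrow> real \<Rightarrow> real" where
  "e_mu \<mu> x = (\<Sum>k. x ^ k / gamma_mu \<mu> k)"

definition theta :: "nat \<Rightarrow> real" where
  "theta k = (if even k then 0 else 1)"

definition h_mu :: "real \<Rightarrow> nat \<Rightarrow> real \<Rightarrow> real \<Rightarrow> real" where
  "h_mu \<mu> k \<xi> \<alpha> =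
     gamma_mu \<mu> k * (\<Sum>j\<le>k div 2. \<alpha> ^ j * \<xi> ^ (k - 2 * j) / (fact j * gamma_mu \<mu> (k - 2 * j)))"

definition T_op :: "real \<Rightarrow> real \<Rightarrow> nat \<Rightarrow> (real \<Rightarrow> real) \<Rightarrow> real \<Rightarrow> real" where
  "T_op \<alpha> \<mu> n f x =
     (1 / (exp (\<alpha> * x\<^sup>2) * e_mu \<mu> (real n * x))) *
     (\<Sum>k. h_mu \<mu> k (real n) \<alpha> / gamma_mu \<mu> k * x ^ k
            * f ((real k + 2 * \<mu> * theta k) / real n))"

end

theory Submission
  imports Defs
begin

text \<open>The weights \<open>h\<^sub>k\<^sup>\<mu>(n,\<alpha>) x\<^sup>k / \<gamma>\<^sub>\<mu>(k)\<close> are the Cauchy-product coefficients of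
  \<open>exp(\<alpha>x\<^sup>2) \<cdot> e\<^sub>\<mu>(nx)\<close>, so for \<open>x \<ge> 0\<close> they are nonnegative and add up to the
  normalising factor: \<open>T\<^sub>n(f;x)\<close> is a weighted mean of values of \<open>f\<close> on \<open>[0,\<infinity>)\<close>,
  whence \<open>|T\<^sub>n(f;x)| \<le> \<parallel>f\<parallel>\<close>. Since \<open>\<gamma>\<^sub>\<mu>(k) \<ge> k!\<close>, all series involved are entire power
  series, which gives continuity.\<close>

lemma gamma_mu_Suc:
  assumes "\<mu> \<ge> 0"
  shows "gamma_mu \<mu> (Suc m) = (real (Suc m) + 2 * \<mu> * theta (Suc m)) * gamma_mu \<mu> m"
proof (cases "even m")
  case True
  then obtain k where k: "m = 2 * k" by blast
  have "real k + \<mu> + 1/2 \<notin> \<int>\<^sub>\<le>\<^sub>0"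
    using assms by (auto dest!: nonpos_Ints_nonpos)
  from Gamma_plus1[OF this]
  have "Gamma (real k + \<mu> + 3/2) = (real k + \<mu> + 1/2) * Gamma (real k + \<mu> + 1/2)"
    by (simp add: add.assoc)
  then have "gamma_mu \<mu> (Suc (2 * k))
      = 2 * (real k + \<mu> + 1/2) * (2 ^ (2 * k) * fact k * Gamma (real k + \<mu> + 1/2) / Gamma (\<mu> + 1/2))"
    by (simp add: gamma_mu_def)
  also have "2 * (real k + \<mu> + 1/2) = real (Suc (2 * k)) + 2 * \<mu> * theta (Suc (2 * k))"
    by (simp add: theta_def)
  finally show ?thesis
    unfolding k by (simp add: gamma_mu_def)
next
  case False
  then obtain k where k: "m = 2 * k + 1" by (metis oddE)
  then have "Suc m div 2 = Suc k" "m div 2 = k" by auto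
  moreover have "real (Suc k) + \<mu> + 1/2 = real k + \<mu> + 3/2" by simp
  ultimately show ?thesis
    using k by (simp add: gamma_mu_def theta_def field_simps)
qed

lemma fact_le_gamma_mu:
  assumes "\<mu> \<ge> 0"
  shows "fact m \<le> gamma_mu \<mu> m"
proof (induction m)
  case 0
  have "Gamma (\<mu> + 1/2) > 0" using assms by simp
  then show ?case by (simp add: gamma_mu_def)
next
  case (Suc m)
  have "real (Suc m) \<le> real (Suc m) + 2 * \<mu> * theta (Suc m)"
    using assms by (simp add: theta_def)
  with Suc have "fact (Suc m) \<le> (real (Suc m) + 2 * \<mu> * theta (Suc m)) * gamma_mu \<mu> m"
    by (simp add: mult_mono)
  then show ?case by (simp add: gamma_mu_Suc[OF assms])
qed

lemma gamma_mu_pos: "\<mu> \<ge> 0 \<Longrightarrow> gamma_mu \<mu> m > 0"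
  by (rule less_le_trans[OF fact_gt_zero fact_le_gamma_mu])

lemma summable_norm_e_mu_series:
  assumes "\<mu> \<ge> 0"
  shows "summable (\<lambda>m. norm (y ^ m / gamma_mu \<mu> m))"
proof (rule summable_comparison_test')
  show "summable (\<lambda>m. \<bar>y\<bar> ^ m / fact m)"
    using summable_exp[of "\<bar>y\<bar>"] by (simp add: field_simps)
next
  fix m
  show "norm (norm (y ^ m / gamma_mu \<mu> m)) \<le> \<bar>y\<bar> ^ m / fact m"
    using fact_le_gamma_mu[OF assms, of m] gamma_mu_pos[OF assms, of m]
    by (simp add: power_abs divide_left_mono)
qed

lemma e_mu_sums: "\<mu> \<ge> 0 \<Longrightarrow> (\<lambda>m. y ^ m / gamma_mu \<mu> m) sums e_mu \<mu> y"
  unfolding e_mu_def by (rule summable_sums, rule summable_norm_cancel, rule summable_norm_e_mu_series)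

lemma e_mu_pos:
  assumes "\<mu> \<ge> 0" and "y \<ge> 0"
  shows "e_mu \<mu> y > 0"
  unfolding e_mu_def
proof (rule suminf_pos2)
  show "summable (\<lambda>m. y ^ m / gamma_mu \<mu> m)"
    using e_mu_sums[OF assms(1)] by (rule sums_summable)
  show "0 \<le> y ^ m / gamma_mu \<mu> m" for m
    using assms gamma_mu_pos[OF assms(1), of m] by simp
  show "0 < y ^ 0 / gamma_mu \<mu> 0"
    using gamma_mu_pos[OF assms(1)] by simp
qed

lemma sums_spread_even:
  fixes c :: "nat \<Rightarrow> 'a::real_normed_vector"
  assumes "c sums s"
  shows "(\<lambda>i. if even i then c (i div 2) else 0) sums s"
proof -
  have "(\<lambda>j. (if even (2 * j) then c (2 * j div 2) else 0)) sums s
      \<longleftrightarrow> (\<lambda>i. if even i then c (i div 2) else 0) sums s"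
    by (rule sums_mono_reindex) (auto simp: strict_mono_def elim!: evenE)
  with assms show ?thesis by simp
qed

lemma sum_atMost_even:
  fixes F :: "nat \<Rightarrow> 'a::comm_monoid_add"
  assumes "\<And>i. odd i \<Longrightarrow> F i = 0"
  shows "(\<Sum>i\<le>k. F i) = (\<Sum>j\<le>k div 2. F (2 * j))"
proof -
  have "(\<Sum>i\<le>k. F i) = (\<Sum>i\<in>(\<lambda>j. 2 * j) ` {..k div 2}. F i)"
  proof (rule sum.mono_neutral_right)
    show "\<forall>i\<in>{..k} - (\<lambda>j. 2 * j) ` {..k div 2}. F i = 0"
    proof
      fix i assume i: "i \<in> {..k} - (\<lambda>j. 2 * j) ` {..k div 2}"
      show "F i = 0"
      proof (cases "even i")
        case True
        with i show ?thesis by (auto elim!: evenE)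
      qed (simp add: assms)
    qed
  qed auto
  also have "\<dots> = (\<Sum>j\<le>k div 2. F (2 * j))"
    by (subst sum.reindex) (auto simp: inj_on_def)
  finally show ?thesis .
qed

lemma exp_square_powser_sums:
  fixes \<alpha> x :: real
  shows "(\<lambda>i. (if even i then \<alpha> ^ (i div 2) / fact (i div 2) else 0) * x ^ i) sums exp (\<alpha> * x\<^sup>2)"
proof -
  have "(\<lambda>j. (\<alpha> * x\<^sup>2) ^ j / fact j) sums exp (\<alpha> * x\<^sup>2)"
    using exp_converges[of "\<alpha> * x\<^sup>2"] by (simp add: field_simps)
  from sums_spread_even[OF this] show ?thesis
    by (rule sums_cong[THEN iffD1, rotated])
       (auto simp: power_mult_distrib power_mult[symmetric] elim!: evenE)
qed

lemma h_mu_over_gamma_mu: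
  assumes "\<mu> \<ge> 0"
  shows "h_mu \<mu> k \<xi> \<alpha> / gamma_mu \<mu> k
       = (\<Sum>j\<le>k div 2. \<alpha> ^ j / fact j * (\<xi> ^ (k - 2 * j) / gamma_mu \<mu> (k - 2 * j)))"
  using gamma_mu_pos[OF assms, of k] by (simp add: h_mu_def)

lemma h_mu_powser_sums:
  fixes \<alpha> \<xi> x :: real
  assumes "\<mu> \<ge> 0"
  shows "(\<lambda>k. h_mu \<mu> k \<xi> \<alpha> / gamma_mu \<mu> k * x ^ k) sums (exp (\<alpha> * x\<^sup>2) * e_mu \<mu> (\<xi> * x))"
proof -
  define A where "A i = (if even i then \<alpha> ^ (i div 2) / fact (i div 2) else 0)" for i
  define B where "B m = \<xi> ^ m / gamma_mu \<mu> m" for m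
  have A_abs: "summable (\<lambda>i. norm (A i * x ^ i))"
  proof -
    have "norm (A i * x ^ i) = (if even i then \<bar>\<alpha>\<bar> ^ (i div 2) / fact (i div 2) else 0) * \<bar>x\<bar> ^ i" for i
      by (simp add: A_def abs_mult power_abs)
    with sums_summable[OF exp_square_powser_sums[of "\<bar>\<alpha>\<bar>" "\<bar>x\<bar>"]] show ?thesis
      by simp
  qed
  have B_abs: "summable (\<lambda>m. norm (B m * x ^ m))"
    using summable_norm_e_mu_series[OF assms, of "\<xi> * x"]
    by (simp add: B_def power_mult_distrib)
  have A_sum: "(\<Sum>i. A i * x ^ i) = exp (\<alpha> * x\<^sup>2)"
    using exp_square_powser_sums by (simp add: A_def sums_iff)
  have B_sum: "(\<Sum>m. B m * x ^ m) = e_mu \<mu> (\<xi> * x)"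
    using e_mu_sums[OF assms, of "\<xi> * x"] by (simp add: B_def sums_iff power_mult_distrib)
  have coeff: "(\<Sum>i\<le>k. A i * x ^ i * (B (k - i) * x ^ (k - i)))
             = h_mu \<mu> k \<xi> \<alpha> / gamma_mu \<mu> k * x ^ k" for k
  proof -
    have term_eq: "A i * x ^ i * (B (k - i) * x ^ (k - i)) = A i * B (k - i) * x ^ k" if "i \<le> k" for i
    proof -
      have "x ^ i * x ^ (k - i) = x ^ k"
        using that by (simp add: power_add[symmetric])
      then show ?thesis by (metis mult.assoc mult.left_commute)
    qed
    then have "(\<Sum>i\<le>k. A i * x ^ i * (B (k - i) * x ^ (k - i))) = (\<Sum>i\<le>k. A i * B (k - i)) * x ^ k"
      unfolding sum_distrib_right by (intro sum.cong refl term_eq) simp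
    also have "(\<Sum>i\<le>k. A i * B (k - i)) = (\<Sum>j\<le>k div 2. A (2 * j) * B (k - 2 * j))"
      by (rule sum_atMost_even) (simp add: A_def)
    also have "\<dots> = h_mu \<mu> k \<xi> \<alpha> / gamma_mu \<mu> k"
      by (simp add: h_mu_over_gamma_mu[OF assms] A_def B_def)
    finally show ?thesis .
  qed
  from Cauchy_product_sums[OF A_abs B_abs] show ?thesis
    by (simp only: coeff A_sum B_sum)
qed

lemma h_mu_nonneg: "\<mu> \<ge> 0 \<Longrightarrow> \<alpha> \<ge> 0 \<Longrightarrow> \<xi> \<ge> 0 \<Longrightarrow> h_mu \<mu> k \<xi> \<alpha> \<ge> 0"
  unfolding h_mu_def using gamma_mu_pos[of \<mu>]
  by (intro mult_nonneg_nonneg sum_nonneg divide_nonneg_pos) (auto intro: less_imp_le)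

lemma summable_norm_powser_weighted:
  fixes w g :: "nat \<Rightarrow> real"
  assumes "summable (\<lambda>k. w k * \<bar>x\<bar> ^ k)" and "\<And>k. w k \<ge> 0" and "\<And>k. \<bar>g k\<bar> \<le> M"
  shows "summable (\<lambda>k. norm (w k * g k * x ^ k))"
proof (rule summable_comparison_test')
  show "summable (\<lambda>k. M * (w k * \<bar>x\<bar> ^ k))"
    using assms(1) by (rule summable_mult)
  show "norm (norm (w k * g k * x ^ k)) \<le> M * (w k * \<bar>x\<bar> ^ k)" for k
  proof -
    have "\<bar>g k\<bar> * (w k * \<bar>x\<bar> ^ k) \<le> M * (w k * \<bar>x\<bar> ^ k)"
      using assms(2,3) by (intro mult_right_mono) auto
    with assms(2)[of k] show ?thesis
      by (simp add: abs_mult power_abs mult_ac)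
  qed
qed

lemma isCont_powser_weighted_quotient:
  fixes w g :: "nat \<Rightarrow> real"
  assumes D: "\<And>y. (\<lambda>k. w k * y ^ k) sums D y"
    and "\<And>k. w k \<ge> 0" and "\<And>k. \<bar>g k\<bar> \<le> M" and "D x \<noteq> 0"
  shows "isCont (\<lambda>y. (\<Sum>k. w k * g k * y ^ k) / D y) x"
proof -
  have "isCont (\<lambda>y. \<Sum>k. w k * g k * y ^ k) x"
  proof (rule isCont_powser_converges_everywhere)
    show "summable (\<lambda>k. w k * g k * y ^ k)" for y
      using summable_norm_powser_weighted[OF sums_summable[OF D] assms(2,3)]
      by (rule summable_norm_cancel)
  qed
  moreover have "isCont D x"
  proof -
    have "D = (\<lambda>y. \<Sum>k. w k * y ^ k)"
      using D by (simp add: fun_eq_iff sums_iff)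
    moreover have "summable (\<lambda>k. w k * y ^ k)" for y
      using D by (rule sums_summable)
    ultimately show ?thesis
      by (simp add: isCont_powser_converges_everywhere)
  qed
  ultimately show ?thesis
    using assms(4) by (rule isCont_divide)
qed

lemma abs_powser_weighted_quotient_le:
  fixes w g :: "nat \<Rightarrow> real"
  assumes D: "(\<lambda>k. w k * x ^ k) sums D" and "x \<ge> 0" and "D > 0"
    and "\<And>k. w k \<ge> 0" and "\<And>k. \<bar>g k\<bar> \<le> M"
  shows "\<bar>(\<Sum>k. w k * g k * x ^ k) / D\<bar> \<le> M"
proof -
  have abs_summable: "summable (\<lambda>k. norm (w k * g k * x ^ k))"
    using assms by (intro summable_norm_powser_weighted[OF _ assms(4,5)]) (simp add: sums_summable)
  have "\<bar>\<Sum>k. w k * g k * x ^ k\<bar> \<le> (\<Sum>k. norm (w k * g k * x ^ k))"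
    using summable_norm[OF abs_summable] by simp
  also have "\<dots> \<le> (\<Sum>k. M * (w k * x ^ k))"
  proof (rule suminf_le[OF _ abs_summable])
    show "summable (\<lambda>k. M * (w k * x ^ k))"
      using D by (intro summable_mult sums_summable)
    show "norm (w k * g k * x ^ k) \<le> M * (w k * x ^ k)" for k
    proof -
      have "\<bar>g k\<bar> * (w k * x ^ k) \<le> M * (w k * x ^ k)"
        using assms(2,4,5) by (intro mult_right_mono) auto
      with assms(2) assms(4)[of k] show ?thesis
        by (simp add: abs_mult mult_ac)
    qed
  qed
  also have "\<dots> = M * D"
    using sums_unique[OF sums_mult[OF D, of M]] by simp
  finally show ?thesis
    using assms(3) by (simp add: abs_div pos_divide_le_eq)
qed

theorem mainTheorem5:
  fixes \<alpha> \<mu> :: real and n :: nat and f :: "real \<Rightarrow> real"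
  assumes "\<alpha> \<ge> 0" and "\<mu> \<ge> 0" and "n \<ge> 1"
    and "continuous_on {0..} f" and "bounded (f ` {0..})"
  shows "continuous_on {0..} (T_op \<alpha> \<mu> n f)
       \<and> bounded (T_op \<alpha> \<mu> n f ` {0..})
       \<and> (SUP x\<in>{0::real..}. \<bar>T_op \<alpha> \<mu> n f x\<bar>) \<le> (SUP x\<in>{0::real..}. \<bar>f x\<bar>)"
proof -
  define w where "w k = h_mu \<mu> k (real n) \<alpha> / gamma_mu \<mu> k" for k
  define p where "p k = (real k + 2 * \<mu> * theta k) / real n" for k
  define D where "D x = exp (\<alpha> * x\<^sup>2) * e_mu \<mu> (real n * x)" for x
  define M where "M = (SUP y\<in>{0::real..}. \<bar>f y\<bar>)"
  have T_eq: "T_op \<alpha> \<mu> n f = (\<lambda>x. (\<Sum>k. w k * f (p k) * x ^ k) / D x)"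
    by (simp add: fun_eq_iff T_op_def w_def p_def D_def mult_ac)
  have D_sums: "(\<lambda>k. w k * x ^ k) sums D x" for x
    unfolding w_def D_def by (rule h_mu_powser_sums[OF assms(2)])
  have D_pos: "D x > 0" if "x \<ge> 0" for x
    using e_mu_pos[OF assms(2)] that by (simp add: D_def)
  have w_nonneg: "w k \<ge> 0" for k
    unfolding w_def by (intro divide_nonneg_pos h_mu_nonneg gamma_mu_pos assms(1,2)) simp
  have "bdd_above ((\<lambda>y. \<bar>f y\<bar>) ` {0..})"
    using assms(5) by (auto simp: bounded_iff intro: bdd_aboveI2)
  moreover have "p k \<ge> 0" for k
    using assms(2) by (simp add: p_def theta_def)
  ultimately have f_le_M: "\<bar>f (p k)\<bar> \<le> M" for k
    unfolding M_def by (intro cSUP_upper) auto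
  have "continuous_on {0..} (T_op \<alpha> \<mu> n f)"
    unfolding T_eq
    by (intro continuous_at_imp_continuous_on ballI isCont_powser_weighted_quotient[OF D_sums w_nonneg f_le_M])
       (auto dest: D_pos)
  moreover have T_le_M: "\<bar>T_op \<alpha> \<mu> n f x\<bar> \<le> M" if "x \<ge> 0" for x
    unfolding T_eq using abs_powser_weighted_quotient_le[OF D_sums that D_pos[OF that] w_nonneg f_le_M] .
  then have "bounded (T_op \<alpha> \<mu> n f ` {0..})"
    by (auto simp: bounded_iff)
  moreover have "(SUP x\<in>{0::real..}. \<bar>T_op \<alpha> \<mu> n f x\<bar>) \<le> M"
    using T_le_M by (intro cSUP_least) auto
  ultimately show ?thesis
    by (simp add: M_def)
qed

end
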